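(* Let $m\ge 1$, $N>0$, $P_1,\dots,P_m>0$ and $g_1,\dots,g_m\ge 0$. Let $\mathcal{P}$ be the set of joint distributions $p_{\mathbf{X}}$ of complex random vectors $\mathbf{X}=(X_1,\dots,X_m)\in\mathbb{C}^m$ with $\mathbb{E}|X_i|^2\le P_i$ for all $i$. For $p_{\mathbf{X}}\in\mathcal{P}$ and $\boldsymbol\theta=(\theta_1,\dots,\theta_m)\in[0,2\pi)^m$ define $$B_{\boldsymbol\theta}(p_{\mathbf{X}})=I\Big(\mathbf{X};\ \sum_{i=1}^m g_i e^{j\theta_i}X_i+Z\Big),$$ where $Z\sim\mathcal{CN}(0,N)$ is independent of $\mathbf{X}$. Let $p^*_{\mathbf{X}}\in\mathcal{P}$ be the distribution under which $X_1,\dots,X_m$ are independent, zero-mean, circularly symmetric complex Gaussian with $\mathbb{E}|X_i|^2=P_i$. Then $$\sup_{p_{\mathbf{X}}\in\mathcal{P}}\ \inf_{\boldsymbol\theta\in[0,2\pi)^m} B_{\boldsymbol\theta}(p_{\mathbf{X}})=\log_2\Big(1+\sum_{i=1}^m g_i^2P_i/N\Big)=B_{\boldsymbol\theta}(p^*_{\mathbf{X}})\quad\text{for every }\boldsymbol\theta,$$ so the max-min is attained by $p^*_{\mathbf{X}}$.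
   Context: $\mathcal{CN}(0,N)$ denotes a circularly symmetric complex Gaussian random variable with variance $\mathbb{E}|Z|^2=N$. Mutual information is measured in bits. $j=\sqrt{-1}$. *)

theory Defs
  imports "HOL-Probability.Probability"
begin

definition cgauss_density :: "real \<Rightarrow> complex \<Rightarrow> real" where
  "cgauss_density N z = exp (- (cmod z)\<^sup>2 / N) / (pi * N)"

definition cgauss :: "real \<Rightarrow> complex measure" where
  "cgauss N = density lborel (\<lambda>z. ennreal (cgauss_density N z))"

definition admissible :: "('m::finite \<Rightarrow> real) \<Rightarrow> (complex ^ 'm) measure set" where
  "admissible Pw = {M. prob_space M \<and> sets M = sets (borel :: (complex ^ 'm) measure) \<and>
      (\<forall>i. (\<integral>\<^sup>+ x. ennreal ((cmod (x $ i))\<^sup>2) \<partial>M) \<le> ennreal (Pw i))}"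

definition Btheta :: "real \<Rightarrow> ('m::finite \<Rightarrow> real) \<Rightarrow> ('m \<Rightarrow> real) \<Rightarrow> (complex ^ 'm) measure \<Rightarrow> real" where
  "Btheta N g \<theta> M = prob_space.mutual_information (M \<Otimes>\<^sub>M cgauss N) 2 borel borel fst
      (\<lambda>(x, z). (\<Sum>i\<in>UNIV. complex_of_real (g i) * cis (\<theta> i) * x $ i) + z)"

definition pstar :: "('m::finite \<Rightarrow> real) \<Rightarrow> (complex ^ 'm) measure" where
  "pstar Pw = density lborel (\<lambda>x. ennreal (\<Prod>i\<in>UNIV. cgauss_density (Pw i) (x $ i)))"

definition angles :: "('m \<Rightarrow> real) set" where
  "angles = {\<theta>. \<forall>i. 0 \<le> \<theta> i \<and> \<theta> i < 2 * pi}"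

end

theory Submission
  imports Defs
begin

(* The proof has
   two halves.
   (1) Achievability: under the product law pstar of independent CN(0,P_i) inputs, s(X)
       is again CN(0, T) with T = sum_i g_i^2 P_i (repeated Gaussian convolution), so Y is
       CN(0, N+T) for every theta and I(X;Y) = log2(1 + T/N) exactly.
   (2) Converse: for an arbitrary admissible M we choose every phase in {0, pi} greedily,
       one coordinate at a time, so that the cross terms of E|s(X)|^2 are nonpositive;
       then E|s(X)|^2 <= T.  For any input, I(X;Y) <= log2(1 + E|s(X)|^2 / N) by the
       Gaussian maximum-entropy argument (Gibbs' inequality against CN(0, N + E|s(X)|^2)). *)

lemma cgauss_density_pos: "a > 0 \<Longrightarrow> cgauss_density a z > 0"
  by (simp add: cgauss_density_def)

lemma cgauss_density_nonneg[simp]: "a > 0 \<Longrightarrow> 0 \<le> cgauss_density a z"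
  using cgauss_density_pos[of a z] by simp

lemma cgauss_density_le: "a > 0 \<Longrightarrow> cgauss_density a z \<le> 1 / (pi * a)"
  by (simp add: cgauss_density_def divide_right_mono)

lemma borel_measurable_cgauss_density[measurable]: "cgauss_density a \<in> borel_measurable borel"
  unfolding cgauss_density_def by measurable

(* With variance a/2 per real dimension, CN(m,a) is the product of two real normal densities;
   this reduces all integrals over C to one-dimensional ones. *)
lemma normal_density_half_variance:
  "a > 0 \<Longrightarrow> normal_density \<mu> (sqrt (a / 2)) x = exp (- (x - \<mu>)\<^sup>2 / a) / sqrt (pi * a)"
  by (simp add: normal_density_def field_simps real_sqrt_divide)

lemma cgauss_density_normal:
  assumes a: "a > 0"
  shows "cgauss_density a (z - m)
       = normal_density (Re m) (sqrt (a / 2)) (Re z) * normal_density (Im m) (sqrt (a / 2)) (Im z)"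
proof -
  have "sqrt (pi * a) * sqrt (pi * a) = pi * a" using a by simp
  moreover have "exp (- (Re z - Re m)\<^sup>2 / a) * exp (- (Im z - Im m)\<^sup>2 / a) = exp (- (cmod (z - m))\<^sup>2 / a)"
    by (simp add: exp_add[symmetric] cmod_power2 add_divide_distrib diff_divide_distrib)
  ultimately show ?thesis
    using a by (simp add: normal_density_half_variance cgauss_density_def)
qed

lemma nn_integral_complex_prod:
  fixes F G :: "real \<Rightarrow> ennreal"
  assumes [measurable]: "F \<in> borel_measurable borel" "G \<in> borel_measurable borel"
  shows "(\<integral>\<^sup>+z. F (Re z) * G (Im z) \<partial>lborel) = (\<integral>\<^sup>+x. F x \<partial>lborel) * (\<integral>\<^sup>+x. G x \<partial>lborel)"
proof -
  define H where "H = (\<lambda>b::complex. if b = 1 then F else G)"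
  have [measurable]: "H b \<in> borel_measurable borel" for b unfolding H_def by simp
  have "(\<integral>\<^sup>+z. (\<Prod>b\<in>Basis. H b (z \<bullet> b)) \<partial>lborel) = (\<Prod>b\<in>Basis. (\<integral>\<^sup>+x. H b x \<partial>lborel))"
    by (rule nn_integral_lborel_prod) auto
  moreover have "(\<Prod>b\<in>Basis. H b (z \<bullet> b)) = F (Re z) * G (Im z)" for z
    by (simp add: H_def Basis_complex_def inner_complex_def)
  ultimately show ?thesis by (simp add: H_def Basis_complex_def)
qed

lemma nn_integral_normal_density: "\<sigma> > 0 \<Longrightarrow> (\<integral>\<^sup>+x. ennreal (normal_density \<mu> \<sigma> x) \<partial>lborel) = 1"
  by (subst nn_integral_eq_integral) auto

lemma nn_integral_normal_second_moment:
  assumes s: "\<sigma> > 0"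
  shows "(\<integral>\<^sup>+x. ennreal (normal_density \<mu> \<sigma> x * x\<^sup>2) \<partial>lborel) = \<sigma>\<^sup>2 + \<mu>\<^sup>2"
proof -
  have i1: "integrable lborel (\<lambda>x. normal_density \<mu> \<sigma> x * (x - \<mu>) ^ 2)"
    using integrable_normal_moment[of \<sigma> \<mu> 2] s by simp
  have v1: "(\<integral>x. normal_density \<mu> \<sigma> x * (x - \<mu>) ^ 2 \<partial>lborel) = \<sigma>\<^sup>2"
    using integral_normal_moment_even[of \<sigma> \<mu> 1] s by (simp add: power2_eq_square)
  have i2: "integrable lborel (\<lambda>x. normal_density \<mu> \<sigma> x * x)"
    using s by (rule integrable_normal_moment_nz_1)
  have v2: "(\<integral>x. normal_density \<mu> \<sigma> x * x \<partial>lborel) = \<mu>"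
    using s by (rule integral_normal_moment_nz_1)
  have eq: "normal_density \<mu> \<sigma> x * x\<^sup>2
      = normal_density \<mu> \<sigma> x * (x - \<mu>) ^ 2 + 2 * \<mu> * (normal_density \<mu> \<sigma> x * x) - \<mu>\<^sup>2 * normal_density \<mu> \<sigma> x" for x
    by (simp add: power2_eq_square algebra_simps)
  have "integrable lborel (\<lambda>x. normal_density \<mu> \<sigma> x * x\<^sup>2)"
    unfolding eq using i1 i2 s by simp
  moreover have "(\<integral>x. normal_density \<mu> \<sigma> x * x\<^sup>2 \<partial>lborel) = \<sigma>\<^sup>2 + \<mu>\<^sup>2"
    unfolding eq using i1 i2 v1 v2 s by (simp add: power2_eq_square)
  ultimately show ?thesis
    by (subst nn_integral_eq_integral) simp_all
qed

lemma nn_integral_cgauss_shift: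
  assumes a: "a > 0"
  shows "(\<integral>\<^sup>+z. ennreal (cgauss_density a (z - m)) \<partial>lborel) = 1"
  using a by (simp add: cgauss_density_normal ennreal_mult' nn_integral_normal_density
      nn_integral_complex_prod[where F="\<lambda>x. ennreal (normal_density (Re m) (sqrt (a / 2)) x)"
        and G="\<lambda>x. ennreal (normal_density (Im m) (sqrt (a / 2)) x)"])

lemma nn_integral_cgauss: "a > 0 \<Longrightarrow> (\<integral>\<^sup>+z. ennreal (cgauss_density a z) \<partial>lborel) = 1"
  using nn_integral_cgauss_shift[of a 0] by simp

lemma nn_integral_cgauss_shift_second_moment:
  assumes a: "a > 0"
  shows "(\<integral>\<^sup>+z. ennreal (cgauss_density a (z - m) * (cmod z)\<^sup>2) \<partial>lborel) = a + (cmod m)\<^sup>2"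
proof -
  define \<sigma> where "\<sigma> = sqrt (a / 2)"
  have \<sigma>: "\<sigma> > 0" "\<sigma>\<^sup>2 = a / 2" using a by (simp_all add: \<sigma>_def)
  define f g where "f = normal_density (Re m) \<sigma>" and "g = normal_density (Im m) \<sigma>"
  have "(\<integral>\<^sup>+z. ennreal (cgauss_density a (z - m) * (cmod z)\<^sup>2) \<partial>lborel)
      = (\<integral>\<^sup>+z. ennreal (f (Re z) * (Re z)\<^sup>2) * ennreal (g (Im z))
               + ennreal (f (Re z)) * ennreal (g (Im z) * (Im z)\<^sup>2) \<partial>lborel)"
    using a by (intro nn_integral_cong)
      (simp add: cgauss_density_normal f_def g_def \<sigma>_def cmod_power2 ennreal_mult'[symmetric]
        ennreal_plus[symmetric] algebra_simps del: ennreal_plus)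
  also have "\<dots> = (\<integral>\<^sup>+x. ennreal (f x * x\<^sup>2) \<partial>lborel) * (\<integral>\<^sup>+x. ennreal (g x) \<partial>lborel)
                 + (\<integral>\<^sup>+x. ennreal (f x) \<partial>lborel) * (\<integral>\<^sup>+x. ennreal (g x * x\<^sup>2) \<partial>lborel)"
    by (simp add: nn_integral_add f_def g_def
        nn_integral_complex_prod[where F="\<lambda>x. ennreal (f x * x\<^sup>2)" and G="\<lambda>x. ennreal (g x)", unfolded f_def g_def]
        nn_integral_complex_prod[where F="\<lambda>x. ennreal (f x)" and G="\<lambda>x. ennreal (g x * x\<^sup>2)", unfolded f_def g_def])
  also have "\<dots> = ennreal (\<sigma>\<^sup>2 + (Re m)\<^sup>2) + ennreal (\<sigma>\<^sup>2 + (Im m)\<^sup>2)"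
    using \<sigma>(1) by (simp only: f_def g_def nn_integral_normal_density nn_integral_normal_second_moment mult_1_right mult_1)
  also have "\<dots> = ennreal (a + (cmod m)\<^sup>2)"
    using \<sigma>(2) by (simp add: cmod_power2 ennreal_plus[symmetric] algebra_simps del: ennreal_plus)
  finally show ?thesis .
qed

lemma nn_integral_cgauss_second_moment:
  "a > 0 \<Longrightarrow> (\<integral>\<^sup>+z. ennreal (cgauss_density a z * (cmod z)\<^sup>2) \<partial>lborel) = a"
  using nn_integral_cgauss_shift_second_moment[of a 0] by simp

lemma prob_space_cgauss: "a > 0 \<Longrightarrow> prob_space (cgauss a)"
  unfolding cgauss_def by (rule prob_spaceI) (simp add: emeasure_density nn_integral_cgauss)

lemma sets_cgauss[simp, measurable_cong]: "sets (cgauss a) = sets borel"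
  by (simp add: cgauss_def)

lemma has_bochner_integral_cgauss: "a > 0 \<Longrightarrow> has_bochner_integral lborel (cgauss_density a) 1"
  using has_bochner_integral_nn_integral[of "cgauss_density a" lborel 1] nn_integral_cgauss[of a] by simp

lemma nn_integral_translate:
  fixes f :: "'a::euclidean_space \<Rightarrow> ennreal"
  assumes [measurable]: "f \<in> borel_measurable borel"
  shows "(\<integral>\<^sup>+z. f (s + z) \<partial>lborel) = (\<integral>\<^sup>+z. f z \<partial>lborel)"
proof -
  have "(\<integral>\<^sup>+z. f z \<partial>lborel) = (\<integral>\<^sup>+z. f z \<partial>distr lborel borel ((+) s))"
    by (simp add: lborel_distr_plus)
  also have "\<dots> = (\<integral>\<^sup>+z. f (s + z) \<partial>lborel)"
    by (subst nn_integral_distr) simp_all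
  finally show ?thesis by simp
qed

lemma nn_integral_cgauss_second_moment_translate:
  assumes a: "a > 0"
  shows "(\<integral>\<^sup>+z. ennreal (cgauss_density a z * (cmod (s + z))\<^sup>2) \<partial>lborel) = a + (cmod s)\<^sup>2"
proof -
  have "(\<integral>\<^sup>+z. ennreal (cgauss_density a z * (cmod (s + z))\<^sup>2) \<partial>lborel)
      = (\<integral>\<^sup>+z. (\<lambda>y. ennreal (cgauss_density a (y - s) * (cmod y)\<^sup>2)) (s + z) \<partial>lborel)"
    by simp
  also have "\<dots> = (\<integral>\<^sup>+y. ennreal (cgauss_density a (y - s) * (cmod y)\<^sup>2) \<partial>lborel)"
    by (rule nn_integral_translate) simp
  also have "\<dots> = a + (cmod s)\<^sup>2"
    using a by (rule nn_integral_cgauss_shift_second_moment)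
  finally show ?thesis .
qed

lemma nn_integral_exp_quad:
  fixes k \<alpha> :: real
  assumes k: "k > 0"
  shows "(\<integral>\<^sup>+t. ennreal (exp (- k * t\<^sup>2 + \<alpha> * t)) \<partial>lborel) = ennreal (sqrt (pi / k) * exp (\<alpha>\<^sup>2 / (4 * k)))"
proof -
  define C where "C = sqrt (pi / k) * exp (\<alpha>\<^sup>2 / (4 * k))"
  define \<phi> where "\<phi> = normal_density (\<alpha> / (2 * k)) (sqrt (1 / (2 * k)))"
  have C: "C > 0" using k by (simp add: C_def)
  have "\<phi> t = exp (- k * (t - \<alpha> / (2 * k))\<^sup>2) / sqrt (pi / k)" for t
    using k by (simp add: \<phi>_def normal_density_def field_simps)
  moreover have "- k * (t - \<alpha> / (2 * k))\<^sup>2 = (- k * t\<^sup>2 + \<alpha> * t) - \<alpha>\<^sup>2 / (4 * k)" for t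
    using k by (simp add: field_simps power2_eq_square)
  ultimately have eq: "exp (- k * t\<^sup>2 + \<alpha> * t) = C * \<phi> t" for t
    using k by (simp add: C_def exp_diff)
  have "(\<integral>\<^sup>+t. ennreal (exp (- k * t\<^sup>2 + \<alpha> * t)) \<partial>lborel) = ennreal C * (\<integral>\<^sup>+t. ennreal (\<phi> t) \<partial>lborel)"
    unfolding eq using C by (simp add: ennreal_mult' \<phi>_def nn_integral_cmult)
  also have "(\<integral>\<^sup>+t. ennreal (\<phi> t) \<partial>lborel) = 1"
    using k by (simp add: \<phi>_def nn_integral_normal_density)
  finally show ?thesis by (simp add: C_def)
qed

lemma nn_integral_complex_exp_quad:
  fixes k :: real and \<gamma> :: complex
  assumes k: "k > 0"
  shows "(\<integral>\<^sup>+w. ennreal (exp (- k * (cmod w)\<^sup>2 + Re (cnj \<gamma> * w))) \<partial>lborel)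
       = ennreal (pi / k * exp ((cmod \<gamma>)\<^sup>2 / (4 * k)))"
proof -
  define F G where "F t = ennreal (exp (- k * t\<^sup>2 + Re \<gamma> * t))"
    and "G t = ennreal (exp (- k * t\<^sup>2 + Im \<gamma> * t))" for t
  have "ennreal (exp (- k * (cmod w)\<^sup>2 + Re (cnj \<gamma> * w))) = F (Re w) * G (Im w)" for w
    by (simp add: F_def G_def ennreal_mult'[symmetric] exp_add[symmetric] cmod_power2 algebra_simps)
  then have "(\<integral>\<^sup>+w. ennreal (exp (- k * (cmod w)\<^sup>2 + Re (cnj \<gamma> * w))) \<partial>lborel)
      = (\<integral>\<^sup>+w. F (Re w) * G (Im w) \<partial>lborel)"
    by simp
  also have "\<dots> = (\<integral>\<^sup>+t. F t \<partial>lborel) * (\<integral>\<^sup>+t. G t \<partial>lborel)"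
    by (rule nn_integral_complex_prod) (simp_all add: F_def G_def)
  also have "\<dots> = ennreal (sqrt (pi / k) * exp ((Re \<gamma>)\<^sup>2 / (4 * k))) * ennreal (sqrt (pi / k) * exp ((Im \<gamma>)\<^sup>2 / (4 * k)))"
    unfolding F_def G_def by (simp only: nn_integral_exp_quad[OF k])
  also have "\<dots> = ennreal (sqrt (pi / k) * exp ((Re \<gamma>)\<^sup>2 / (4 * k)) * (sqrt (pi / k) * exp ((Im \<gamma>)\<^sup>2 / (4 * k))))"
    using k by (simp add: ennreal_mult')
  also have "sqrt (pi / k) * exp ((Re \<gamma>)\<^sup>2 / (4 * k)) * (sqrt (pi / k) * exp ((Im \<gamma>)\<^sup>2 / (4 * k)))
      = pi / k * exp ((cmod \<gamma>)\<^sup>2 / (4 * k))"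
  proof -
    have "sqrt (pi / k) * sqrt (pi / k) = pi / k" using k by simp
    moreover have "exp ((Re \<gamma>)\<^sup>2 / (4 * k)) * exp ((Im \<gamma>)\<^sup>2 / (4 * k)) = exp ((cmod \<gamma>)\<^sup>2 / (4 * k))"
      by (simp add: cmod_power2 exp_add[symmetric] add_divide_distrib)
    ultimately show ?thesis by (metis mult.assoc mult.left_commute)
  qed
  finally show ?thesis .
qed

lemma cgauss_conv:
  fixes u c :: complex and a b :: real
  assumes a: "a > 0" and b: "b > 0"
  shows "(\<integral>\<^sup>+w. ennreal (cgauss_density a (u - c * w) * cgauss_density b w) \<partial>lborel)
       = ennreal (cgauss_density (a + (cmod c)\<^sup>2 * b) u)"
proof -
  define k where "k = (cmod c)\<^sup>2 / a + 1 / b"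
  define \<gamma> where "\<gamma> = 2 * cnj c * u / a"
  define K where "K = exp (- (cmod u)\<^sup>2 / a) / (pi * a * (pi * b))"
  define D where "D = a + (cmod c)\<^sup>2 * b"
  have k: "k > 0" using a b by (simp add: k_def add_nonneg_pos)
  have K: "K > 0" using a b by (simp add: K_def)
  have D: "D > 0" using a b by (simp add: D_def add_pos_nonneg)
  have abk: "a * b * k = D" using a b by (simp add: k_def D_def field_simps)
  have exponent: "- (cmod (u - c * w))\<^sup>2 / a - (cmod w)\<^sup>2 / b
      = - (cmod u)\<^sup>2 / a + (- k * (cmod w)\<^sup>2 + Re (cnj \<gamma> * w))" for w
    using a b unfolding k_def \<gamma>_def cmod_power2
    by (simp add: field_simps) (simp add: power2_eq_square algebra_simps)
  have pointwise: "cgauss_density a (u - c * w) * cgauss_density b w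
      = K * exp (- k * (cmod w)\<^sup>2 + Re (cnj \<gamma> * w))" for w
  proof -
    have "cgauss_density a (u - c * w) * cgauss_density b w
        = exp (- (cmod (u - c * w))\<^sup>2 / a - (cmod w)\<^sup>2 / b) / (pi * a * (pi * b))"
      by (simp add: cgauss_density_def exp_diff exp_minus field_simps)
    also have "\<dots> = exp (- (cmod u)\<^sup>2 / a + (- k * (cmod w)\<^sup>2 + Re (cnj \<gamma> * w))) / (pi * a * (pi * b))"
      by (simp only: exponent)
    finally show ?thesis unfolding K_def exp_add by simp
  qed
  have "(\<integral>\<^sup>+w. ennreal (cgauss_density a (u - c * w) * cgauss_density b w) \<partial>lborel)
      = ennreal K * (\<integral>\<^sup>+w. ennreal (exp (- k * (cmod w)\<^sup>2 + Re (cnj \<gamma> * w))) \<partial>lborel)"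
    using K by (simp add: pointwise ennreal_mult' nn_integral_cmult)
  also have "\<dots> = ennreal (K * (pi / k * exp ((cmod \<gamma>)\<^sup>2 / (4 * k))))"
    using K k by (subst nn_integral_complex_exp_quad[OF k]) (simp add: ennreal_mult'[symmetric] del: times_divide_eq_right)
  also have "K * (pi / k * exp ((cmod \<gamma>)\<^sup>2 / (4 * k))) = cgauss_density D u"
  proof -
    have "(cmod \<gamma>)\<^sup>2 / (4 * k) = (cmod c)\<^sup>2 * (cmod u)\<^sup>2 * b / (a * D)"
      using a b k unfolding \<gamma>_def abk[symmetric]
      by (simp add: norm_mult norm_divide power_mult_distrib power2_eq_square field_simps)
    also have "\<dots> = (cmod u)\<^sup>2 / a - (cmod u)\<^sup>2 / D"
      using a D by (simp add: D_def field_simps)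
    finally have "- (cmod u)\<^sup>2 / a + (cmod \<gamma>)\<^sup>2 / (4 * k) = - (cmod u)\<^sup>2 / D" by simp
    then have "exp (- (cmod u)\<^sup>2 / a) * exp ((cmod \<gamma>)\<^sup>2 / (4 * k)) = exp (- (cmod u)\<^sup>2 / D)"
      by (simp add: exp_add[symmetric])
    then show ?thesis
      using a b k unfolding K_def cgauss_density_def abk[symmetric]
      by (simp add: field_simps)
  qed
  finally show ?thesis by (simp add: D_def)
qed

lemma vec_lambda_measurable[measurable]:
  "(\<lambda>f. vec_lambda f :: complex ^ 'm::finite) \<in> measurable (Pi\<^sub>M UNIV (\<lambda>_. lborel)) borel"
proof (subst borel_measurable_euclidean_space, intro ballI)
  fix b :: "complex ^ 'm" assume "b \<in> Basis"
  then obtain i c where b: "b = axis i c" "c \<in> Basis" unfolding Basis_vec_def by auto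
  have "(\<lambda>f. (\<chi> i. f i) \<bullet> b) = (\<lambda>f. f i \<bullet> c)" by (simp add: b inner_axis)
  then show "(\<lambda>f. (\<chi> i. f i) \<bullet> b) \<in> borel_measurable (Pi\<^sub>M UNIV (\<lambda>_. lborel))"
    by simp
qed

lemma mem_box_vec: "(x :: complex ^ 'm::finite) \<in> box l u \<longleftrightarrow> (\<forall>i. x $ i \<in> box (l $ i) (u $ i))"
  unfolding mem_box Basis_vec_def by (auto simp: inner_axis)

lemma prod_Basis_vec:
  fixes F :: "complex ^ 'm::finite \<Rightarrow> real"
  shows "(\<Prod>b\<in>Basis. F b) = (\<Prod>i\<in>UNIV. \<Prod>c\<in>Basis. F (axis i c))"
proof -
  have B: "(Basis :: (complex ^ 'm) set) = (\<lambda>(i, c). axis i c) ` (UNIV \<times> Basis)"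
    unfolding Basis_vec_def by auto
  have inj: "inj_on (\<lambda>(i, c). axis i c :: complex ^ 'm) (UNIV \<times> Basis)"
    by (auto simp: inj_on_def axis_eq_axis nonzero_Basis)
  show ?thesis unfolding B prod.reindex[OF inj]
    by (simp add: prod.cartesian_product split_def)
qed

lemma lborel_vec: "(lborel :: (complex ^ 'm::finite) measure) = distr (Pi\<^sub>M UNIV (\<lambda>_. lborel)) borel vec_lambda"
proof (rule lborel_eqI)
  interpret finite_product_sigma_finite "\<lambda>_::'m. lborel :: complex measure" UNIV
    by standard simp
  fix l u :: "complex ^ 'm" assume le: "\<And>b. b \<in> Basis \<Longrightarrow> l \<bullet> b \<le> u \<bullet> b"
  have pre: "vec_lambda -` box l u \<inter> space (Pi\<^sub>M UNIV (\<lambda>_. lborel)) = Pi\<^sub>E UNIV (\<lambda>i. box (l $ i) (u $ i))"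
    unfolding space_PiM space_lborel by (auto simp: mem_box_vec PiE_iff)
  have le': "l $ i \<bullet> c \<le> u $ i \<bullet> c" if c: "c \<in> Basis" for i c
  proof -
    have "axis i c \<in> (Basis :: (complex ^ 'm) set)" using c by (auto simp: Basis_vec_def)
    from le[OF this] show ?thesis by (simp add: inner_axis)
  qed
  have "emeasure (distr (Pi\<^sub>M UNIV (\<lambda>_. lborel)) borel vec_lambda) (box l u)
      = emeasure (Pi\<^sub>M UNIV (\<lambda>_. lborel)) (Pi\<^sub>E UNIV (\<lambda>i. box (l $ i) (u $ i)))"
    by (subst emeasure_distr) (auto simp only: pre vec_lambda_measurable sets_borel intro: open_box borel_open)
  also have "\<dots> = (\<Prod>i\<in>UNIV. emeasure lborel (box (l $ i) (u $ i)))"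
    by (rule emeasure_PiM) auto
  also have "\<dots> = (\<Prod>i\<in>UNIV. ennreal (\<Prod>c\<in>Basis. (u $ i - l $ i) \<bullet> c))"
    using le' by (intro prod.cong refl) (simp add: emeasure_lborel_box_eq inner_diff_left)
  also have "\<dots> = ennreal (\<Prod>i\<in>UNIV. \<Prod>c\<in>Basis. (u $ i - l $ i) \<bullet> c)"
    using le' by (intro prod_ennreal) (simp add: prod_nonneg inner_diff_left)
  also have "(\<Prod>i\<in>UNIV. \<Prod>c\<in>Basis. (u $ i - l $ i) \<bullet> c) = (\<Prod>b\<in>Basis. (u - l) \<bullet> b)"
    by (simp add: prod_Basis_vec inner_axis)
  finally show "emeasure (distr (Pi\<^sub>M UNIV (\<lambda>_. lborel)) borel vec_lambda) (box l u) = (\<Prod>b\<in>Basis. (u - l) \<bullet> b)" .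
qed simp

lemma vec_nth_measurable[measurable]: "(\<lambda>x::'a::euclidean_space^'n. x $ i) \<in> borel_measurable borel"
  by (intro borel_measurable_continuous_onI linear_continuous_on bounded_linear_vec_nth)

interpretation lborel_family: product_sigma_finite "\<lambda>_. lborel :: complex measure"
  by standard

lemma nn_integral_pstar:
  fixes Pw :: "'m::finite \<Rightarrow> real"
  assumes [measurable]: "h \<in> borel_measurable borel" and P: "\<And>i. Pw i > 0"
  shows "(\<integral>\<^sup>+x. h x \<partial>pstar Pw) =
    (\<integral>\<^sup>+f. (\<Prod>i\<in>UNIV. ennreal (cgauss_density (Pw i) (f i))) * h (vec_lambda f) \<partial>Pi\<^sub>M UNIV (\<lambda>_. lborel))"
proof -
  have [measurable]: "(\<lambda>x::complex^'m. \<Prod>i\<in>UNIV. cgauss_density (Pw i) (x $ i)) \<in> borel_measurable borel"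
    by measurable
  have "(\<integral>\<^sup>+x. h x \<partial>pstar Pw) = (\<integral>\<^sup>+x. ennreal (\<Prod>i\<in>UNIV. cgauss_density (Pw i) (x $ i)) * h x \<partial>lborel)"
    unfolding pstar_def by (rule nn_integral_density) measurable
  also have "\<dots> = (\<integral>\<^sup>+f. ennreal (\<Prod>i\<in>UNIV. cgauss_density (Pw i) (vec_lambda f $ i)) * h (vec_lambda f) \<partial>Pi\<^sub>M UNIV (\<lambda>_. lborel))"
    by (subst lborel_vec, subst nn_integral_distr) simp_all
  also have "\<dots> = (\<integral>\<^sup>+f. (\<Prod>i\<in>UNIV. ennreal (cgauss_density (Pw i) (f i))) * h (vec_lambda f) \<partial>Pi\<^sub>M UNIV (\<lambda>_. lborel))"
    using P by (simp add: prod_ennreal)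
  finally show ?thesis .
qed

lemma nn_integral_cgauss_linear_conv:
  fixes Pw :: "'m \<Rightarrow> real" and c :: "'m \<Rightarrow> complex"
  assumes I: "finite I" and P: "\<And>i. Pw i > 0" and a: "a > 0"
  shows "(\<integral>\<^sup>+f. (\<Prod>i\<in>I. ennreal (cgauss_density (Pw i) (f i))) * ennreal (cgauss_density a (y - (\<Sum>i\<in>I. c i * f i)))
            \<partial>Pi\<^sub>M I (\<lambda>_. lborel))
       = ennreal (cgauss_density (a + (\<Sum>i\<in>I. (cmod (c i))\<^sup>2 * Pw i)) y)"
  using I a
proof (induction I arbitrary: a y rule: finite_induct)
  case empty
  then show ?case by (simp add: lborel_family.nn_integral_empty space_PiM_empty)
next
  case (insert k I)
  define F where "F f = (\<Prod>i\<in>insert k I. ennreal (cgauss_density (Pw i) (f i)))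
                        * ennreal (cgauss_density a (y - (\<Sum>i\<in>insert k I. c i * f i)))" for f
  define G where "G f = (\<Prod>i\<in>I. ennreal (cgauss_density (Pw i) (f i)))" for f :: "'m \<Rightarrow> complex"
  define L where "L f = (\<Sum>i\<in>I. c i * f i)" for f :: "'m \<Rightarrow> complex"
  have [measurable]: "F \<in> borel_measurable (Pi\<^sub>M (insert k I) (\<lambda>_. lborel))"
    unfolding F_def[abs_def] by measurable
  have a': "a + (cmod (c k))\<^sup>2 * Pw k > 0" using insert.prems P[of k] by (simp add: add_pos_nonneg)
  have split: "F (x(k := v)) = G x * ennreal (cgauss_density a ((y - L x) - c k * v) * cgauss_density (Pw k) v)" for x v
  proof -
    have "G (x(k := v)) = G x" "L (x(k := v)) = L x"
      using insert.hyps unfolding G_def L_def by (auto intro!: prod.cong sum.cong)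
    then show ?thesis
      using insert.hyps insert.prems P[of k]
      by (simp add: F_def G_def L_def ennreal_mult' algebra_simps)
  qed
  have "(\<integral>\<^sup>+f. F f \<partial>Pi\<^sub>M (insert k I) (\<lambda>_. lborel))
      = (\<integral>\<^sup>+x. (\<integral>\<^sup>+v. F (x(k := v)) \<partial>lborel) \<partial>Pi\<^sub>M I (\<lambda>_. lborel))"
    by (rule lborel_family.product_nn_integral_insert) (use insert.hyps in auto)
  also have "\<dots> = (\<integral>\<^sup>+x. G x * ennreal (cgauss_density (a + (cmod (c k))\<^sup>2 * Pw k) (y - L x)) \<partial>Pi\<^sub>M I (\<lambda>_. lborel))"
    unfolding split
    by (intro nn_integral_cong, subst nn_integral_cmult) (simp_all add: cgauss_conv insert.prems P)
  also have "\<dots> = ennreal (cgauss_density (a + (cmod (c k))\<^sup>2 * Pw k + (\<Sum>i\<in>I. (cmod (c i))\<^sup>2 * Pw i)) y)"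
    unfolding G_def L_def by (rule insert.IH[OF a'])
  also have "a + (cmod (c k))\<^sup>2 * Pw k + (\<Sum>i\<in>I. (cmod (c i))\<^sup>2 * Pw i) = a + (\<Sum>i\<in>insert k I. (cmod (c i))\<^sup>2 * Pw i)"
    using insert.hyps by simp
  finally show ?case by (simp only: F_def)
qed

lemma pstar_prod_integral:
  fixes Pw :: "'m::finite \<Rightarrow> real"
  assumes P: "\<And>i. Pw i > 0" and [measurable]: "\<And>i. F i \<in> borel_measurable borel"
  shows "(\<integral>\<^sup>+x. (\<Prod>i\<in>UNIV. F i (x $ i)) \<partial>pstar Pw) = (\<Prod>i\<in>UNIV. \<integral>\<^sup>+z. ennreal (cgauss_density (Pw i) z) * F i z \<partial>lborel)"
proof -
  have "(\<integral>\<^sup>+x. (\<Prod>i\<in>UNIV. F i (x $ i)) \<partial>pstar Pw)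
     = (\<integral>\<^sup>+f. (\<Prod>i\<in>UNIV. ennreal (cgauss_density (Pw i) (f i))) * (\<Prod>i\<in>UNIV. F i (vec_lambda f $ i)) \<partial>Pi\<^sub>M UNIV (\<lambda>_. lborel))"
    using P by (subst nn_integral_pstar) simp_all
  also have "\<dots> = (\<integral>\<^sup>+f. (\<Prod>i\<in>UNIV. ennreal (cgauss_density (Pw i) (f i)) * F i (f i)) \<partial>Pi\<^sub>M UNIV (\<lambda>_. lborel))"
    by (simp add: prod.distrib)
  also have "\<dots> = (\<Prod>i\<in>UNIV. \<integral>\<^sup>+z. ennreal (cgauss_density (Pw i) z) * F i z \<partial>lborel)"
    by (rule lborel_family.product_nn_integral_prod) simp_all
  finally show ?thesis .
qed

lemma prob_space_pstar:
  fixes Pw :: "'m::finite \<Rightarrow> real"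
  assumes P: "\<And>i. Pw i > 0"
  shows "prob_space (pstar Pw)"
proof (rule prob_spaceI)
  have "emeasure (pstar Pw) (space (pstar Pw)) = (\<integral>\<^sup>+x. (\<Prod>i\<in>UNIV. (\<lambda>_ _. 1::ennreal) i (x $ i)) \<partial>pstar Pw)"
    by (simp add: nn_integral_const)
  also have "\<dots> = 1"
    using P by (subst pstar_prod_integral) (simp_all add: nn_integral_cgauss)
  finally show "emeasure (pstar Pw) (space (pstar Pw)) = 1" .
qed

lemma sets_pstar[simp, measurable_cong]: "sets (pstar Pw) = sets borel"
  by (simp add: pstar_def)

lemma pstar_second_moment:
  fixes Pw :: "'m::finite \<Rightarrow> real"
  assumes P: "\<And>i. Pw i > 0"
  shows "(\<integral>\<^sup>+x. ennreal ((cmod (x $ k))\<^sup>2) \<partial>pstar Pw) = Pw k"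
proof -
  define F where "F = (\<lambda>i z. if i = k then ennreal ((cmod z)\<^sup>2) else 1)"
  have [measurable]: "F i \<in> borel_measurable borel" for i unfolding F_def by simp
  have "(\<integral>\<^sup>+x. ennreal ((cmod (x $ k))\<^sup>2) \<partial>pstar Pw) = (\<integral>\<^sup>+x. (\<Prod>i\<in>UNIV. F i (x $ i)) \<partial>pstar Pw)"
    by (simp add: F_def prod.If_cases)
  also have "\<dots> = (\<Prod>i\<in>UNIV. \<integral>\<^sup>+z. ennreal (cgauss_density (Pw i) z) * F i z \<partial>lborel)"
    using P by (rule pstar_prod_integral) simp
  also have "\<dots> = (\<Prod>i\<in>UNIV. if i = k then ennreal (Pw k) else 1)"
    using P by (intro prod.cong refl) (auto simp: F_def nn_integral_cgauss ennreal_mult'[symmetric] nn_integral_cgauss_second_moment)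
  also have "\<dots> = Pw k" by (simp add: prod.If_cases)
  finally show ?thesis .
qed

lemma pstar_admissible:
  fixes Pw :: "'m::finite \<Rightarrow> real"
  assumes P: "\<And>i. Pw i > 0"
  shows "pstar Pw \<in> admissible Pw"
  using P by (simp add: admissible_def prob_space_pstar pstar_second_moment)

lemma pstar_linear_conv:
  fixes Pw :: "'m::finite \<Rightarrow> real" and c :: "'m \<Rightarrow> complex"
  assumes P: "\<And>i. Pw i > 0" and a: "a > 0"
  shows "(\<integral>\<^sup>+x. ennreal (cgauss_density a (y - (\<Sum>i\<in>UNIV. c i * x $ i))) \<partial>pstar Pw)
     = ennreal (cgauss_density (a + (\<Sum>i\<in>UNIV. (cmod (c i))\<^sup>2 * Pw i)) y)"
  using P by (subst nn_integral_pstar) (simp_all add: nn_integral_cgauss_linear_conv[OF finite[of UNIV] P a])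

lemma log_ratio_lower_bound:
  fixes x y :: real
  assumes "x > 0" "y > 0"
  shows "x * log 2 (x / y) \<ge> (x - y) / ln 2"
proof -
  have "ln (y / x) \<le> y / x - 1" using assms by (intro ln_le_minus_one) simp
  then have "ln (x / y) \<ge> 1 - y / x" using assms by (simp add: ln_div)
  then have "x * ln (x / y) \<ge> x * (1 - y / x)" using assms by (intro mult_left_mono) auto
  then have "x * ln (x / y) \<ge> x - y" using assms by (simp add: algebra_simps)
  then show ?thesis using assms by (simp add: log_def divide_right_mono)
qed

lemma gibbs_inequality:
  fixes q g :: "'a \<Rightarrow> real" and L :: "'a measure"
  assumes pos: "\<And>y. q y > 0" "\<And>y. g y > 0"
    and q: "has_bochner_integral L q 1" and g: "has_bochner_integral L g 1"
    and i: "integrable L (\<lambda>y. q y * log 2 (q y / g y))"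
  shows "(\<integral>y. q y * log 2 (q y / g y) \<partial>L) \<ge> 0"
proof -
  have "(\<integral>y. (q y - g y) / ln 2 \<partial>L) \<le> (\<integral>y. q y * log 2 (q y / g y) \<partial>L)"
    using q g i pos by (intro integral_mono log_ratio_lower_bound) (auto simp: has_bochner_integral_iff)
  moreover have "(\<integral>y. (q y - g y) / ln 2 \<partial>L) = 0"
    using q g by (simp add: has_bochner_integral_iff)
  ultimately show ?thesis by simp
qed

locale awgn_channel = prob_space M for M :: "'a::euclidean_space measure" +
  fixes N :: real and s :: "'a \<Rightarrow> complex"
  assumes N: "N > 0" and sets_M[measurable_cong]: "sets M = sets borel"
    and s_measurable[measurable]: "s \<in> borel_measurable borel"
begin

definition PXZ :: "('a \<times> complex) measure" where "PXZ = M \<Otimes>\<^sub>M cgauss N"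
definition Y :: "'a \<times> complex \<Rightarrow> complex" where "Y = (\<lambda>(x, z). s x + z)"
definition qY :: "complex \<Rightarrow> ennreal" where "qY y = (\<integral>\<^sup>+x. ennreal (cgauss_density N (y - s x)) \<partial>M)"
definition qYr :: "complex \<Rightarrow> real" where "qYr y = enn2real (qY y)"
definition PY :: "complex measure" where "PY = distr PXZ borel Y"
definition PXY :: "('a \<times> complex) measure" where "PXY = distr PXZ (borel \<Otimes>\<^sub>M borel) (\<lambda>\<omega>. (fst \<omega>, Y \<omega>))"
definition joint_density :: "'a \<times> complex \<Rightarrow> real" where
  "joint_density = (\<lambda>(x, y). cgauss_density N (y - s x) / qYr y)"

lemma s_measurable_M[measurable]: "s \<in> borel_measurable M"
  using s_measurable by (simp add: measurable_cong_sets[OF sets_M refl])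

lemma prob_space_noise: "prob_space (cgauss N)" using N by (rule prob_space_cgauss)

lemma prob_PXZ: "prob_space PXZ"
  unfolding PXZ_def by (intro prob_space_pair prob_space_axioms prob_space_noise)

lemma sets_PXZ[measurable_cong]: "sets PXZ = sets (borel \<Otimes>\<^sub>M borel)"
  unfolding PXZ_def by (intro sets_pair_measure_cong sets_M sets_cgauss)

lemma Y_measurable[measurable]: "Y \<in> borel_measurable (borel \<Otimes>\<^sub>M borel)"
  unfolding Y_def by measurable

lemma nn_integral_PXZ:
  assumes [measurable]: "h \<in> borel_measurable (borel \<Otimes>\<^sub>M borel)"
  shows "(\<integral>\<^sup>+\<omega>. h \<omega> \<partial>PXZ) = (\<integral>\<^sup>+x. (\<integral>\<^sup>+z. ennreal (cgauss_density N z) * h (x, z) \<partial>lborel) \<partial>M)"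
proof -
  interpret cg: prob_space "cgauss N" by (rule prob_space_noise)
  have hm: "h \<in> borel_measurable (M \<Otimes>\<^sub>M cgauss N)"
    using assms by (simp add: measurable_cong_sets[OF sets_pair_measure_cong[OF sets_M sets_cgauss] refl])
  have "(\<integral>\<^sup>+\<omega>. h \<omega> \<partial>PXZ) = (\<integral>\<^sup>+x. (\<integral>\<^sup>+z. h (x, z) \<partial>cgauss N) \<partial>M)"
    unfolding PXZ_def by (rule cg.nn_integral_fst[symmetric, OF hm])
  also have "\<dots> = (\<integral>\<^sup>+x. (\<integral>\<^sup>+z. ennreal (cgauss_density N z) * h (x, z) \<partial>lborel) \<partial>M)"
    unfolding cgauss_def by (intro nn_integral_cong nn_integral_density) simp_all
  finally show ?thesis .
qed

lemma qY_measurable[measurable]: "qY \<in> borel_measurable borel"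
proof -
  have "(\<lambda>y. \<integral>\<^sup>+x. ennreal (cgauss_density N (y - s x)) \<partial>M) \<in> borel_measurable (borel :: complex measure)"
    by (rule borel_measurable_nn_integral_fst[where f="\<lambda>(y,x). ennreal (cgauss_density N (y - s x))", simplified])
      (simp add: measurable_cong_sets[OF sets_pair_measure_cong[OF refl sets_M] refl])
  then show ?thesis by (simp add: qY_def[abs_def])
qed

lemma qY_pos: "qY y > 0"
proof -
  have "qY y \<noteq> 0"
  proof
    assume "qY y = 0"
    then have "AE x in M. ennreal (cgauss_density N (y - s x)) = 0"
      unfolding qY_def by (subst (asm) nn_integral_0_iff_AE) simp_all
    then have "AE x in M. False"
      by eventually_elim (metis cgauss_density_pos[OF N] less_irrefl ennreal_eq_0_iff less_imp_le not_le)
    then show False by (simp add: AE_False)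
  qed
  then show ?thesis by (simp add: zero_less_iff_neq_zero)
qed

lemma qY_le: "qY y \<le> ennreal (1 / (pi * N))"
proof -
  have "qY y \<le> (\<integral>\<^sup>+x. ennreal (1 / (pi * N)) \<partial>M)"
    unfolding qY_def using N by (intro nn_integral_mono) (simp add: cgauss_density_le)
  also have "\<dots> = ennreal (1 / (pi * N))" by (simp add: emeasure_space_1)
  finally show ?thesis .
qed

lemma qY_fin: "qY y < \<top>"
  using qY_le[of y] by (simp add: le_less_trans)

lemma qY_eq: "qY y = ennreal (qYr y)"
  using qY_fin[of y] by (simp add: qYr_def)

lemma qYr_pos: "qYr y > 0"
  using qY_pos[of y] qY_fin[of y] by (simp add: qYr_def enn2real_positive_iff)

lemma qYr_measurable[measurable]: "qYr \<in> borel_measurable borel"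
  unfolding qYr_def[abs_def] by measurable

lemma PY_eq: "PY = density lborel qY"
proof (rule measure_eqI)
  show "sets PY = sets (density lborel qY)" by (simp add: PY_def)
  fix A :: "complex set" assume "A \<in> sets PY"
  then have A[measurable]: "A \<in> sets borel" by (simp add: PY_def)
  have "emeasure PY A = (\<integral>\<^sup>+\<omega>. indicator A (Y \<omega>) \<partial>PXZ)"
  proof -
    have "emeasure PY A = emeasure PXZ (Y -` A \<inter> space PXZ)"
      unfolding PY_def by (rule emeasure_distr) (simp_all add: measurable_cong_sets[OF sets_PXZ refl])
    also have "\<dots> = (\<integral>\<^sup>+\<omega>. indicator (Y -` A \<inter> space PXZ) \<omega> \<partial>PXZ)"
      by (rule nn_integral_indicator[symmetric]) (simp add: measurable_cong_sets[OF sets_PXZ refl])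
    also have "\<dots> = (\<integral>\<^sup>+\<omega>. indicator A (Y \<omega>) \<partial>PXZ)"
      by (intro nn_integral_cong) (auto split: split_indicator)
    finally show ?thesis .
  qed
  also have "\<dots> = (\<integral>\<^sup>+x. (\<integral>\<^sup>+z. ennreal (cgauss_density N z) * indicator A (s x + z) \<partial>lborel) \<partial>M)"
    by (subst nn_integral_PXZ) (simp_all add: Y_def)
  also have "\<dots> = (\<integral>\<^sup>+x. (\<integral>\<^sup>+y. ennreal (cgauss_density N (y - s x)) * indicator A y \<partial>lborel) \<partial>M)"
  proof -
    have tr: "(\<integral>\<^sup>+z. ennreal (cgauss_density N z) * indicator A (t + z) \<partial>lborel) = (\<integral>\<^sup>+y. ennreal (cgauss_density N (y - t)) * indicator A y \<partial>lborel)" for t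
      using nn_integral_translate[of "\<lambda>y. ennreal (cgauss_density N (y - t)) * indicator A y" t] by simp
    show ?thesis by (simp only: tr)
  qed
  also have "\<dots> = (\<integral>\<^sup>+y. (\<integral>\<^sup>+x. ennreal (cgauss_density N (y - s x)) * indicator A y \<partial>M) \<partial>lborel)"
  proof -
    interpret pair_sigma_finite M lborel ..
    show ?thesis
      by (rule Fubini'[where f="\<lambda>x y. ennreal (cgauss_density N (y - s x)) * indicator A y", symmetric])
        (simp add: measurable_cong_sets[OF sets_pair_measure_cong[OF sets_M refl] refl])
  qed
  also have "\<dots> = (\<integral>\<^sup>+y. qY y * indicator A y \<partial>lborel)"
    unfolding qY_def by (intro nn_integral_cong nn_integral_multc) simp
  also have "\<dots> = emeasure (density lborel qY) A"
    by (subst emeasure_density) (simp_all add: nn_integral_indicator)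
  finally show "emeasure PY A = emeasure (density lborel qY) A" .
qed

lemma prob_PY: "prob_space PY"
  unfolding PY_def by (intro prob_space.prob_space_distr prob_PXZ) (simp add: measurable_cong_sets[OF sets_PXZ refl])

lemma sets_PY[simp, measurable_cong]: "sets PY = sets borel"
  by (simp add: PY_def)

lemma joint_density_measurable[measurable]: "joint_density \<in> borel_measurable (borel \<Otimes>\<^sub>M borel)"
  unfolding joint_density_def by measurable

lemma joint_density_nonneg: "joint_density \<omega> \<ge> 0"
  using qYr_pos N by (auto simp: joint_density_def case_prod_beta intro!: divide_nonneg_pos less_imp_le[OF cgauss_density_pos])

lemma sets_MPY[measurable_cong]: "sets (M \<Otimes>\<^sub>M PY) = sets (borel \<Otimes>\<^sub>M borel)"
  by (rule sets_pair_measure_cong[OF sets_M sets_PY])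

lemma sets_PXY[measurable_cong]: "sets PXY = sets (borel \<Otimes>\<^sub>M borel)"
  by (simp add: PXY_def)

lemma PXY_eq: "PXY = density (M \<Otimes>\<^sub>M PY) (\<lambda>\<omega>. ennreal (joint_density \<omega>))"
proof (rule measure_eqI)
  show "sets PXY = sets (density (M \<Otimes>\<^sub>M PY) (\<lambda>\<omega>. ennreal (joint_density \<omega>)))"
    by (simp only: sets_density sets_PXY sets_MPY)
  fix A assume "A \<in> sets PXY"
  then have A[measurable]: "A \<in> sets (borel \<Otimes>\<^sub>M borel)" by (simp add: sets_PXY)
  have tr: "(\<integral>\<^sup>+z. ennreal (cgauss_density N z) * indicator A (x, t + z) \<partial>lborel) = (\<integral>\<^sup>+y. ennreal (cgauss_density N (y - t)) * indicator A (x, y) \<partial>lborel)" for t x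
    using nn_integral_translate[of "\<lambda>y. ennreal (cgauss_density N (y - t)) * indicator A (x, y)" t] by simp
  have "emeasure PXY A = emeasure PXZ ((\<lambda>\<omega>. (fst \<omega>, Y \<omega>)) -` A \<inter> space PXZ)"
    unfolding PXY_def by (rule emeasure_distr) (simp_all add: measurable_cong_sets[OF sets_PXZ refl])
  also have "\<dots> = (\<integral>\<^sup>+\<omega>. indicator ((\<lambda>\<omega>. (fst \<omega>, Y \<omega>)) -` A \<inter> space PXZ) \<omega> \<partial>PXZ)"
    by (rule nn_integral_indicator[symmetric]) (simp add: measurable_cong_sets[OF sets_PXZ refl])
  also have "\<dots> = (\<integral>\<^sup>+\<omega>. indicator A (fst \<omega>, Y \<omega>) \<partial>PXZ)"
    by (intro nn_integral_cong) (auto split: split_indicator)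
  also have "\<dots> = (\<integral>\<^sup>+x. (\<integral>\<^sup>+z. ennreal (cgauss_density N z) * indicator A (x, s x + z) \<partial>lborel) \<partial>M)"
    by (subst nn_integral_PXZ) (simp_all add: Y_def)
  also have "\<dots> = (\<integral>\<^sup>+x. (\<integral>\<^sup>+y. ennreal (cgauss_density N (y - s x)) * indicator A (x, y) \<partial>lborel) \<partial>M)"
    by (simp only: tr)
  also have "\<dots> = (\<integral>\<^sup>+x. (\<integral>\<^sup>+y. qY y * (ennreal (joint_density (x, y)) * indicator A (x, y)) \<partial>lborel) \<partial>M)"
  proof (intro nn_integral_cong)
    fix x y
    have "qY y * ennreal (joint_density (x, y)) = ennreal (cgauss_density N (y - s x))"
      using qYr_pos[of y] N by (simp add: qY_eq joint_density_def ennreal_mult'[symmetric] less_imp_le[OF cgauss_density_pos])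
    then show "ennreal (cgauss_density N (y - s x)) * indicator A (x, y) = qY y * (ennreal (joint_density (x, y)) * indicator A (x, y))"
      by (simp add: mult.assoc[symmetric])
  qed
  also have "\<dots> = (\<integral>\<^sup>+x. (\<integral>\<^sup>+y. ennreal (joint_density (x, y)) * indicator A (x, y) \<partial>PY) \<partial>M)"
    unfolding PY_eq by (intro nn_integral_cong nn_integral_density[symmetric]) simp_all
  also have "\<dots> = (\<integral>\<^sup>+\<omega>. ennreal (joint_density \<omega>) * indicator A \<omega> \<partial>(M \<Otimes>\<^sub>M PY))"
  proof -
    interpret PY: prob_space PY by (rule prob_PY)
    show ?thesis
      by (rule PY.nn_integral_fst[where f="\<lambda>\<omega>. ennreal (joint_density \<omega>) * indicator A \<omega>", simplified])
        (simp add: measurable_cong_sets[OF sets_MPY refl])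
  qed
  also have "\<dots> = emeasure (density (M \<Otimes>\<^sub>M PY) (\<lambda>\<omega>. ennreal (joint_density \<omega>))) A"
    by (subst emeasure_density) (simp_all add: measurable_cong_sets[OF sets_MPY refl] sets_MPY)
  finally show "emeasure PXY A = emeasure (density (M \<Otimes>\<^sub>M PY) (\<lambda>\<omega>. ennreal (joint_density \<omega>))) A" .
qed

lemma distr_fst: "distr PXZ borel fst = M"
proof -
  interpret cg: prob_space "cgauss N" by (rule prob_space_noise)
  have "distr PXZ borel fst = distr PXZ M fst"
  proof (rule measure_eqI)
    show "sets (distr PXZ borel fst) = sets (distr PXZ M fst)" by (simp add: sets_M)
    fix A assume "A \<in> sets (distr PXZ borel fst)"
    then have A: "A \<in> sets borel" "A \<in> sets M" by (simp_all add: sets_M)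
    have f1: "fst \<in> measurable PXZ borel" by (simp add: measurable_cong_sets[OF sets_PXZ refl])
    have f2: "fst \<in> measurable PXZ M" by (simp add: measurable_cong_sets[OF sets_PXZ sets_M])
    show "emeasure (distr PXZ borel fst) A = emeasure (distr PXZ M fst) A"
      using A by (simp add: emeasure_distr[OF f1] emeasure_distr[OF f2])
  qed
  also have "\<dots> = M" unfolding PXZ_def by (rule cg.distr_pair_fst)
  finally show ?thesis .
qed

definition MI :: real where "MI = prob_space.mutual_information PXZ 2 borel borel fst Y"

lemma MI_KL: "MI = KL_divergence 2 (M \<Otimes>\<^sub>M PY) PXY"
  unfolding MI_def prob_space.mutual_information_def[OF prob_PXZ] distr_fst
  by (simp add: PY_def PXY_def)

lemma prob_MPY: "prob_space (M \<Otimes>\<^sub>M PY)"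
  by (intro prob_space_pair prob_space_axioms prob_PY)

lemma KL_as_integral: "KL_divergence 2 (M \<Otimes>\<^sub>M PY) PXY = (\<integral>\<omega>. log 2 (joint_density \<omega>) \<partial>PXY)"
proof -
  interpret MP: prob_space "M \<Otimes>\<^sub>M PY" by (rule prob_MPY)
  have "AE \<omega> in M \<Otimes>\<^sub>M PY. ennreal (joint_density \<omega>) = RN_deriv (M \<Otimes>\<^sub>M PY) PXY \<omega>"
    by (rule MP.RN_deriv_unique) (simp_all add: PXY_eq)
  then have "AE \<omega> in PXY. ennreal (joint_density \<omega>) = RN_deriv (M \<Otimes>\<^sub>M PY) PXY \<omega>"
    unfolding PXY_eq by (subst AE_density) (auto elim: AE_mp)
  then have "AE \<omega> in PXY. entropy_density 2 (M \<Otimes>\<^sub>M PY) PXY \<omega> = log 2 (joint_density \<omega>)"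
    by eventually_elim (unfold entropy_density_def comp_def, metis enn2real_ennreal joint_density_nonneg)
  then show ?thesis
    unfolding KL_divergence_def
    by (intro integral_cong_AE) (simp_all add: measurable_cong_sets[OF sets_PXY sets_MPY[symmetric]]
        measurable_cong_sets[OF sets_PXY refl])
qed

lemma MI_as_integral: "MI = (\<integral>\<omega>. log 2 (cgauss_density N (snd \<omega>) / qYr (Y \<omega>)) \<partial>PXZ)"
proof -
  have "MI = (\<integral>\<omega>. log 2 (joint_density \<omega>) \<partial>PXY)" by (simp add: MI_KL KL_as_integral)
  also have "\<dots> = (\<integral>\<omega>. log 2 (joint_density (fst \<omega>, Y \<omega>)) \<partial>PXZ)"
    unfolding PXY_def by (rule integral_distr) (simp_all add: measurable_cong_sets[OF sets_PXZ refl])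
  also have "\<dots> = (\<integral>\<omega>. log 2 (cgauss_density N (snd \<omega>) / qYr (Y \<omega>)) \<partial>PXZ)"
    by (intro Bochner_Integration.integral_cong refl) (auto simp: joint_density_def Y_def)
  finally show ?thesis .
qed

lemma MI_nonneg: "MI \<ge> 0"
proof -
  interpret MP: information_space "M \<Otimes>\<^sub>M PY" 2
    unfolding information_space_def information_space_axioms_def using prob_MPY by simp
  have prJ: "prob_space PXY" unfolding PXY_def
    by (intro prob_space.prob_space_distr prob_PXZ) (simp add: measurable_cong_sets[OF sets_PXZ refl])
  show ?thesis
  proof (cases "integrable (M \<Otimes>\<^sub>M PY) (\<lambda>\<omega>. joint_density \<omega> * log 2 (joint_density \<omega>))")
    case True
    have "0 \<le> KL_divergence 2 (M \<Otimes>\<^sub>M PY) (density (M \<Otimes>\<^sub>M PY) joint_density)"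
      by (rule MP.KL_nonneg) (use prJ True in \<open>simp_all add: PXY_eq[symmetric] joint_density_nonneg\<close>)
    then show ?thesis by (simp add: MI_KL PXY_eq)
  next
    case False
    have "\<not> integrable PXY (\<lambda>\<omega>. log 2 (joint_density \<omega>))"
      unfolding PXY_eq using False by (subst integrable_density) (simp_all add: joint_density_nonneg)
    then show ?thesis by (simp add: MI_KL KL_as_integral not_integrable_integral_eq)
  qed
qed

definition signal_power :: ennreal where "signal_power = (\<integral>\<^sup>+x. ennreal ((cmod (s x))\<^sup>2) \<partial>M)"

lemma noise_power: "(\<integral>\<^sup>+\<omega>. ennreal ((cmod (snd \<omega>))\<^sup>2) \<partial>PXZ) = N"
proof -
  have "(\<integral>\<^sup>+\<omega>. ennreal ((cmod (snd \<omega>))\<^sup>2) \<partial>PXZ) = (\<integral>\<^sup>+x. (\<integral>\<^sup>+z. ennreal (cgauss_density N z) * ennreal ((cmod z)\<^sup>2) \<partial>lborel) \<partial>M)"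
    by (subst nn_integral_PXZ) simp_all
  also have "\<dots> = (\<integral>\<^sup>+x. ennreal N \<partial>M)"
    using N by (intro nn_integral_cong) (simp add: ennreal_mult'[symmetric] nn_integral_cgauss_second_moment)
  also have "\<dots> = N" by (simp add: emeasure_space_1)
  finally show ?thesis .
qed

lemma output_power: "(\<integral>\<^sup>+\<omega>. ennreal ((cmod (Y \<omega>))\<^sup>2) \<partial>PXZ) = N + signal_power"
proof -
  have "(\<integral>\<^sup>+\<omega>. ennreal ((cmod (Y \<omega>))\<^sup>2) \<partial>PXZ) = (\<integral>\<^sup>+x. (\<integral>\<^sup>+z. ennreal (cgauss_density N z) * ennreal ((cmod (s x + z))\<^sup>2) \<partial>lborel) \<partial>M)"
    by (subst nn_integral_PXZ) (simp_all add: Y_def)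
  also have "\<dots> = (\<integral>\<^sup>+x. ennreal N + ennreal ((cmod (s x))\<^sup>2) \<partial>M)"
    using N by (intro nn_integral_cong) (simp add: ennreal_mult'[symmetric] nn_integral_cgauss_second_moment_translate ennreal_plus)
  also have "\<dots> = N + signal_power" by (simp add: nn_integral_add signal_power_def emeasure_space_1)
  finally show ?thesis .
qed

lemma output_power_density: "(\<integral>\<^sup>+\<omega>. ennreal ((cmod (Y \<omega>))\<^sup>2) \<partial>PXZ) = (\<integral>\<^sup>+y. qY y * ennreal ((cmod y)\<^sup>2) \<partial>lborel)"
proof -
  have "(\<integral>\<^sup>+\<omega>. ennreal ((cmod (Y \<omega>))\<^sup>2) \<partial>PXZ) = (\<integral>\<^sup>+y. ennreal ((cmod y)\<^sup>2) \<partial>PY)"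
    unfolding PY_def by (subst nn_integral_distr) (simp_all add: measurable_cong_sets[OF sets_PXZ refl])
  also have "\<dots> = (\<integral>\<^sup>+y. qY y * ennreal ((cmod y)\<^sup>2) \<partial>lborel)"
    unfolding PY_eq by (rule nn_integral_density) simp_all
  finally show ?thesis .
qed

lemma has_bochner_integral_qYr: "has_bochner_integral lborel qYr 1"
proof -
  have "emeasure PY (space PY) = 1" using prob_PY by (simp add: prob_space.emeasure_space_1)
  then have "(\<integral>\<^sup>+y. ennreal (qYr y) \<partial>lborel) = 1"
    unfolding PY_eq by (simp add: emeasure_density qY_eq[abs_def])
  then show ?thesis
    using qYr_pos by (intro has_bochner_integral_nn_integral) (auto simp: less_imp_le)
qed

lemma integral_of_output:
  assumes [measurable]: "f \<in> borel_measurable borel" and i: "integrable PXZ (\<lambda>\<omega>. f (Y \<omega>))"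
  shows "integrable lborel (\<lambda>y. qYr y * f y)" and "(\<integral>\<omega>. f (Y \<omega>) \<partial>PXZ) = (\<integral>y. qYr y * f y \<partial>lborel)"
proof -
  have PYd: "PY = density lborel (\<lambda>y. ennreal (qYr y))" unfolding PY_eq qY_eq[abs_def] ..
  have Ym: "Y \<in> measurable PXZ borel" by (simp add: measurable_cong_sets[OF sets_PXZ refl])
  have iPY: "integrable PY f" unfolding PY_def using i by (subst integrable_distr_eq[OF Ym]) simp_all
  then show "integrable lborel (\<lambda>y. qYr y * f y)"
    unfolding PYd by (subst (asm) integrable_density) (simp_all add: less_imp_le[OF qYr_pos])
  have "(\<integral>\<omega>. f (Y \<omega>) \<partial>PXZ) = (\<integral>y. f y \<partial>PY)"
    unfolding PY_def by (rule integral_distr[symmetric, OF Ym]) simp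
  also have "\<dots> = (\<integral>y. qYr y * f y \<partial>lborel)"
    unfolding PYd by (subst integral_density) (simp_all add: less_imp_le[OF qYr_pos])
  finally show "(\<integral>\<omega>. f (Y \<omega>) \<partial>PXZ) = (\<integral>y. qYr y * f y \<partial>lborel)" .
qed

(* For finite signal power S, compare the output with the Gaussian CN(0,V) of the same power
   V = N + S: the log-ratio log(g_N(Z) / g_V(Y)) has expectation log2(V/N), which yields the
   exact value when Y is Gaussian and the maximum-entropy bound in general. *)
context
  fixes S :: real
  assumes S_nonneg: "S \<ge> 0" and signal_power_eq: "signal_power = ennreal S"
begin

definition V :: real where "V = N + S"

lemma V_pos: "V > 0"
  using N S_nonneg by (simp add: V_def)

lemma has_bochner_integral_noise_power: "has_bochner_integral PXZ (\<lambda>\<omega>. (cmod (snd \<omega>))\<^sup>2) N"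
  using N by (intro has_bochner_integral_nn_integral) (simp_all add: noise_power measurable_cong_sets[OF sets_PXZ refl])

lemma has_bochner_integral_output_power: "has_bochner_integral PXZ (\<lambda>\<omega>. (cmod (Y \<omega>))\<^sup>2) V"
  using N S_nonneg by (intro has_bochner_integral_nn_integral)
    (simp_all add: output_power signal_power_eq V_def ennreal_plus measurable_cong_sets[OF sets_PXZ refl])

definition gauss_log_ratio :: "'a \<times> complex \<Rightarrow> real" where
  "gauss_log_ratio \<omega> = (ln (V / N) - (cmod (snd \<omega>))\<^sup>2 / N + (cmod (Y \<omega>))\<^sup>2 / V) / ln 2"

lemma gauss_log_ratio_eq: "log 2 (cgauss_density N (snd \<omega>) / cgauss_density V (Y \<omega>)) = gauss_log_ratio \<omega>"
proof -
  have "cgauss_density N (snd \<omega>) / cgauss_density V (Y \<omega>)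
      = (V / N) * (exp (- (cmod (snd \<omega>))\<^sup>2 / N) / exp (- (cmod (Y \<omega>))\<^sup>2 / V))"
    using N V_pos by (simp add: cgauss_density_def field_simps)
  also have "exp (- (cmod (snd \<omega>))\<^sup>2 / N) / exp (- (cmod (Y \<omega>))\<^sup>2 / V)
      = exp (- (cmod (snd \<omega>))\<^sup>2 / N + (cmod (Y \<omega>))\<^sup>2 / V)"
    by (simp add: exp_diff[symmetric])
  finally have ratio: "cgauss_density N (snd \<omega>) / cgauss_density V (Y \<omega>)
      = (V / N) * exp (- (cmod (snd \<omega>))\<^sup>2 / N + (cmod (Y \<omega>))\<^sup>2 / V)" .
  have "ln (cgauss_density N (snd \<omega>) / cgauss_density V (Y \<omega>))
      = ln (V / N) + ln (exp (- (cmod (snd \<omega>))\<^sup>2 / N + (cmod (Y \<omega>))\<^sup>2 / V))"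
    unfolding ratio using N V_pos by (subst ln_mult) simp_all
  then show ?thesis unfolding gauss_log_ratio_def log_def by simp
qed

lemma has_bochner_integral_gauss_log_ratio: "has_bochner_integral PXZ gauss_log_ratio (log 2 (V / N))"
proof -
  interpret PXZ: prob_space PXZ by (rule prob_PXZ)
  have "has_bochner_integral PXZ gauss_log_ratio ((ln (V / N) - N / N + V / V) / ln 2)"
    unfolding gauss_log_ratio_def[abs_def]
    using has_bochner_integral_noise_power has_bochner_integral_output_power
    by (intro has_bochner_integral_divide_zero has_bochner_integral_add has_bochner_integral_diff)
      (auto simp: has_bochner_integral_iff PXZ.integrable_const PXZ.prob_space)
  moreover have "(ln (V / N) - N / N + V / V) / ln 2 = log 2 (V / N)"
    using N V_pos by (simp add: log_def)
  ultimately show ?thesis by simp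
qed

lemma MI_exact:
  assumes q: "\<And>y. qYr y = cgauss_density V y"
  shows "MI = log 2 (V / N)"
  using has_bochner_integral_gauss_log_ratio
  by (simp add: MI_as_integral q gauss_log_ratio_eq has_bochner_integral_iff)

(* In general I(X;Y) <= log2(V/N): the difference is the relative entropy of qYr to CN(0,V). *)
lemma MI_le: "MI \<le> log 2 (V / N)"
proof (cases "integrable PXZ (\<lambda>\<omega>. log 2 (cgauss_density N (snd \<omega>) / qYr (Y \<omega>)))")
  case False
  then have "MI = 0" by (simp add: MI_as_integral not_integrable_integral_eq)
  then show ?thesis using N S_nonneg by (simp add: V_def)
next
  case True
  define D where "D y = log 2 (qYr y / cgauss_density V y)" for y
  have [measurable]: "D \<in> borel_measurable borel" unfolding D_def[abs_def] by measurable
  have pw: "gauss_log_ratio \<omega> - log 2 (cgauss_density N (snd \<omega>) / qYr (Y \<omega>)) = D (Y \<omega>)" for \<omega>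
  proof -
    have "cgauss_density N (snd \<omega>) > 0" "cgauss_density V (Y \<omega>) > 0" "qYr (Y \<omega>) > 0"
      using N V_pos qYr_pos by (simp_all add: cgauss_density_pos)
    then show ?thesis by (simp add: gauss_log_ratio_eq[symmetric] D_def log_divide)
  qed
  have iG: "integrable PXZ gauss_log_ratio"
    using has_bochner_integral_gauss_log_ratio by (simp add: has_bochner_integral_iff)
  have iD: "integrable PXZ (\<lambda>\<omega>. D (Y \<omega>))"
    using Bochner_Integration.integrable_diff[OF iG True] by (simp add: pw)
  have "MI = log 2 (V / N) - (\<integral>\<omega>. D (Y \<omega>) \<partial>PXZ)"
    using Bochner_Integration.integral_diff[OF iG True] has_bochner_integral_gauss_log_ratio
    by (simp add: pw MI_as_integral has_bochner_integral_iff)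
  moreover have "(\<integral>\<omega>. D (Y \<omega>) \<partial>PXZ) = (\<integral>y. qYr y * D y \<partial>lborel)"
    by (rule integral_of_output(2)) (simp_all add: iD)
  moreover have "(\<integral>y. qYr y * D y \<partial>lborel) \<ge> 0"
    unfolding D_def
  proof (rule gibbs_inequality)
    show "integrable lborel (\<lambda>y. qYr y * log 2 (qYr y / cgauss_density V y))"
      using integral_of_output(1)[OF _ iD] by (simp add: D_def)
  qed (use qYr_pos V_pos has_bochner_integral_qYr has_bochner_integral_cgauss cgauss_density_pos in auto)
  ultimately show ?thesis by simp
qed

end

(* Gaussian output CN(0,V') forces signal power V' - N and I(X;Y) = log2(V'/N). *)
lemma MI_gaussian_output:
  assumes V': "V' > 0" and q: "\<And>y. qYr y = cgauss_density V' y"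
  shows "MI = log 2 (V' / N)"
proof -
  have "ennreal N + signal_power = (\<integral>\<^sup>+y. qY y * ennreal ((cmod y)\<^sup>2) \<partial>lborel)"
    using output_power output_power_density by simp
  also have "\<dots> = ennreal V'"
    using V' by (simp add: qY_eq q ennreal_mult'[symmetric] nn_integral_cgauss_second_moment)
  finally have sum: "ennreal N + signal_power = ennreal V'" .
  then have "signal_power \<noteq> \<top>" by auto
  then obtain S where S: "S \<ge> 0" "signal_power = ennreal S"
    by (metis enn2real_nonneg ennreal_enn2real_if)
  have "ennreal (N + S) = ennreal V'"
    using sum N S by (simp add: ennreal_plus[symmetric] del: ennreal_plus)
  then have "V' = N + S"
    using N S V' by (subst (asm) ennreal_inj) auto
  with MI_exact[OF S] q show ?thesis by (simp add: V_def[OF S])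
qed

end

definition phase_sum :: "('m \<Rightarrow> real) \<Rightarrow> ('m \<Rightarrow> real) \<Rightarrow> 'm set \<Rightarrow> complex ^ 'm::finite \<Rightarrow> complex" where
  "phase_sum g \<theta> I x = (\<Sum>i\<in>I. complex_of_real (g i) * cis (\<theta> i) * x $ i)"

lemma phase_sum_measurable[measurable]: "phase_sum g \<theta> I \<in> borel_measurable borel"
  unfolding phase_sum_def[abs_def] by measurable

lemma awgn_channel_admissible:
  assumes "M \<in> admissible Pw" "N > 0"
  shows "awgn_channel M N (phase_sum g \<theta> UNIV)"
  using assms unfolding awgn_channel_def awgn_channel_axioms_def admissible_def by simp

lemma Btheta_eq_MI:
  assumes "M \<in> admissible Pw" "N > 0"
  shows "Btheta N g \<theta> M = awgn_channel.MI M N (phase_sum g \<theta> UNIV)"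
proof -
  interpret awgn_channel M N "phase_sum g \<theta> UNIV" using assms by (rule awgn_channel_admissible)
  show ?thesis unfolding Btheta_def MI_def PXZ_def Y_def phase_sum_def ..
qed

lemma Btheta_nonneg:
  assumes "M \<in> admissible Pw" "N > 0"
  shows "Btheta N g \<theta> M \<ge> 0"
proof -
  interpret awgn_channel M N "phase_sum g \<theta> UNIV" using assms by (rule awgn_channel_admissible)
  show ?thesis using assms by (simp add: Btheta_eq_MI MI_nonneg)
qed

(* Achievability: under pstar the output is CN(0, N + sum g_i^2 P_i) for every choice of phases. *)
lemma Btheta_pstar:
  fixes Pw g :: "'m::finite \<Rightarrow> real"
  assumes P: "\<And>i. Pw i > 0" and g: "\<And>i. g i \<ge> 0" and N: "N > 0"
  shows "Btheta N g \<theta> (pstar Pw) = log 2 (1 + (\<Sum>i\<in>UNIV. (g i)\<^sup>2 * Pw i) / N)"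
proof -
  have adm: "pstar Pw \<in> admissible Pw" using P by (rule pstar_admissible)
  interpret awgn_channel "pstar Pw" N "phase_sum g \<theta> UNIV"
    using adm N by (rule awgn_channel_admissible)
  define T where "T = (\<Sum>i\<in>UNIV. (g i)\<^sup>2 * Pw i)"
  have NT: "N + T > 0"
    unfolding T_def using N P by (intro add_pos_nonneg sum_nonneg mult_nonneg_nonneg) (auto simp: less_imp_le)
  have gain: "(cmod (complex_of_real (g i) * cis (\<theta> i)))\<^sup>2 * Pw i = (g i)\<^sup>2 * Pw i" for i
    using g[of i] by (simp add: norm_mult)
  have "qY y = ennreal (cgauss_density (N + T) y)" for y
    unfolding qY_def phase_sum_def
    using pstar_linear_conv[OF P N, where y=y and c="\<lambda>i. complex_of_real (g i) * cis (\<theta> i)"]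
    by (simp add: gain T_def)
  then have "qYr y = cgauss_density (N + T) y" for y
    using NT by (simp add: qYr_def)
  then have "MI = log 2 ((N + T) / N)" by (rule MI_gaussian_output[OF NT])
  also have "(N + T) / N = 1 + T / N" using N by (simp add: field_simps)
  finally show ?thesis using adm N by (simp add: Btheta_eq_MI T_def)
qed

lemma cmod_add_sq: "(cmod (a + b))\<^sup>2 = (cmod a)\<^sup>2 + (cmod b)\<^sup>2 + 2 * Re (a * cnj b)"
  unfolding cmod_power2 by (simp add: power2_eq_square algebra_simps)

lemma cnj_measurable[measurable]: "cnj \<in> borel_measurable borel"
  by (intro borel_measurable_continuous_onI continuous_on_cnj continuous_on_id)

lemma sign_choice:
  fixes A B :: "'a \<Rightarrow> complex"
  assumes [measurable]: "A \<in> borel_measurable M" "B \<in> borel_measurable M"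
    and iA: "integrable M (\<lambda>x. (cmod (A x))\<^sup>2)" and iB: "integrable M (\<lambda>x. (cmod (B x))\<^sup>2)"
  shows "\<exists>t\<in>{0, pi}. integrable M (\<lambda>x. (cmod (A x + cis t * B x))\<^sup>2)
            \<and> (\<integral>x. (cmod (A x + cis t * B x))\<^sup>2 \<partial>M) \<le> (\<integral>x. (cmod (A x))\<^sup>2 \<partial>M) + (\<integral>x. (cmod (B x))\<^sup>2 \<partial>M)"
proof -
  have iR: "integrable M (\<lambda>x. Re (A x * cnj (B x)))"
  proof (rule Bochner_Integration.integrable_bound)
    show "integrable M (\<lambda>x. (cmod (A x))\<^sup>2 + (cmod (B x))\<^sup>2)" using iA iB by simp
    have "\<bar>Re (A x * cnj (B x))\<bar> \<le> (cmod (A x))\<^sup>2 + (cmod (B x))\<^sup>2" for x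
    proof -
      have "\<bar>Re (A x * cnj (B x))\<bar> \<le> cmod (A x) * cmod (B x)"
        using abs_Re_le_cmod[of "A x * cnj (B x)"] by (simp add: norm_mult)
      also have "\<dots> \<le> (cmod (A x))\<^sup>2 + (cmod (B x))\<^sup>2"
      proof -
        have "0 \<le> cmod (A x) * cmod (B x)" by simp
        moreover have "2 * (cmod (A x) * cmod (B x)) \<le> (cmod (A x))\<^sup>2 + (cmod (B x))\<^sup>2"
          using sum_squares_bound[of "cmod (A x)" "cmod (B x)"] by (simp add: mult.assoc)
        ultimately show ?thesis by linarith
      qed
      finally show ?thesis .
    qed
    then show "AE x in M. norm (Re (A x * cnj (B x))) \<le> norm ((cmod (A x))\<^sup>2 + (cmod (B x))\<^sup>2)"
      by simp
  qed simp
  define R where "R = (\<integral>x. Re (A x * cnj (B x)) \<partial>M)"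
  define e :: real where "e = (if R \<le> 0 then 1 else -1)"
  define t where "t = (if R \<le> 0 then 0 else pi)"
  have t: "t \<in> {0, pi}" by (simp add: t_def)
  have "cis t = complex_of_real e" by (simp add: t_def e_def)
  then have pw: "(cmod (A x + cis t * B x))\<^sup>2 = (cmod (A x))\<^sup>2 + (cmod (B x))\<^sup>2 + 2 * e * Re (A x * cnj (B x))" for x
    by (auto simp: cmod_add_sq e_def)
  have "integrable M (\<lambda>x. (cmod (A x + cis t * B x))\<^sup>2)"
    unfolding pw using iA iB iR by simp
  moreover have "(\<integral>x. (cmod (A x + cis t * B x))\<^sup>2 \<partial>M)
      = (\<integral>x. (cmod (A x))\<^sup>2 \<partial>M) + (\<integral>x. (cmod (B x))\<^sup>2 \<partial>M) + 2 * (e * R)"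
    unfolding pw R_def using iA iB iR by simp
  moreover have "e * R \<le> 0" by (simp add: e_def)
  ultimately have "integrable M (\<lambda>x. (cmod (A x + cis t * B x))\<^sup>2)"
    and "(\<integral>x. (cmod (A x + cis t * B x))\<^sup>2 \<partial>M) \<le> (\<integral>x. (cmod (A x))\<^sup>2 \<partial>M) + (\<integral>x. (cmod (B x))\<^sup>2 \<partial>M)"
    by linarith+
  with t show ?thesis by blast
qed

lemma choose_phases:
  fixes M :: "(complex ^ 'm::finite) measure" and g :: "'m \<Rightarrow> real"
  assumes sets_M: "sets M = sets borel" and L2: "\<And>i. integrable M (\<lambda>x. (cmod (x $ i))\<^sup>2)"
    and I: "finite I"
  shows "\<exists>\<theta>. (\<forall>i. \<theta> i \<in> {0, pi}) \<and> integrable M (\<lambda>x. (cmod (phase_sum g \<theta> I x))\<^sup>2) \<and>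
      (\<integral>x. (cmod (phase_sum g \<theta> I x))\<^sup>2 \<partial>M) \<le> (\<Sum>i\<in>I. (g i)\<^sup>2 * (\<integral>x. (cmod (x $ i))\<^sup>2 \<partial>M))"
  using I
proof (induction I rule: finite_induct)
  case empty
  show ?case by (rule exI[of _ "\<lambda>_. 0"]) (simp add: phase_sum_def)
next
  case (insert k I)
  obtain \<theta> where \<theta>: "\<forall>i. \<theta> i \<in> {0, pi}" and iA: "integrable M (\<lambda>x. (cmod (phase_sum g \<theta> I x))\<^sup>2)"
    and leA: "(\<integral>x. (cmod (phase_sum g \<theta> I x))\<^sup>2 \<partial>M) \<le> (\<Sum>i\<in>I. (g i)\<^sup>2 * (\<integral>x. (cmod (x $ i))\<^sup>2 \<partial>M))"
    using insert.IH by blast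
  define B where "B x = complex_of_real (g k) * x $ k" for x :: "complex ^ 'm"
  have [measurable]: "phase_sum g \<theta> I \<in> borel_measurable M" "B \<in> borel_measurable M"
    unfolding B_def[abs_def] by (simp_all add: measurable_cong_sets[OF sets_M refl])
  have iB: "integrable M (\<lambda>x. (cmod (B x))\<^sup>2)"
    using integrable_mult_left[OF L2[of k], of "(g k)\<^sup>2"] by (simp add: B_def norm_mult power_mult_distrib)
  have intB: "(\<integral>x. (cmod (B x))\<^sup>2 \<partial>M) = (g k)\<^sup>2 * (\<integral>x. (cmod (x $ k))\<^sup>2 \<partial>M)"
    by (simp add: B_def norm_mult power_mult_distrib)
  have "\<exists>t\<in>{0, pi}. integrable M (\<lambda>x. (cmod (phase_sum g \<theta> I x + cis t * B x))\<^sup>2)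
      \<and> (\<integral>x. (cmod (phase_sum g \<theta> I x + cis t * B x))\<^sup>2 \<partial>M)
          \<le> (\<integral>x. (cmod (phase_sum g \<theta> I x))\<^sup>2 \<partial>M) + (\<integral>x. (cmod (B x))\<^sup>2 \<partial>M)"
    by (rule sign_choice[OF _ _ iA iB]) measurable
  then obtain t where t: "t \<in> {0, pi}"
    and it: "integrable M (\<lambda>x. (cmod (phase_sum g \<theta> I x + cis t * B x))\<^sup>2)"
    and lt: "(\<integral>x. (cmod (phase_sum g \<theta> I x + cis t * B x))\<^sup>2 \<partial>M)
             \<le> (\<integral>x. (cmod (phase_sum g \<theta> I x))\<^sup>2 \<partial>M) + (\<integral>x. (cmod (B x))\<^sup>2 \<partial>M)"
    by blast
  define \<theta>' where "\<theta>' = \<theta>(k := t)"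
  have step: "phase_sum g \<theta>' (insert k I) x = phase_sum g \<theta> I x + cis t * B x" for x
  proof -
    have "phase_sum g \<theta>' I x = phase_sum g \<theta> I x"
      unfolding phase_sum_def \<theta>'_def using insert.hyps by (intro sum.cong) auto
    then show ?thesis
      using insert.hyps by (simp add: phase_sum_def \<theta>'_def B_def algebra_simps)
  qed
  have "(\<integral>x. (cmod (phase_sum g \<theta>' (insert k I) x))\<^sup>2 \<partial>M)
      \<le> (\<Sum>i\<in>I. (g i)\<^sup>2 * (\<integral>x. (cmod (x $ i))\<^sup>2 \<partial>M)) + (g k)\<^sup>2 * (\<integral>x. (cmod (x $ k))\<^sup>2 \<partial>M)"
    unfolding step using lt leA intB by linarith
  also have "\<dots> = (\<Sum>i\<in>insert k I. (g i)\<^sup>2 * (\<integral>x. (cmod (x $ i))\<^sup>2 \<partial>M))"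
    using insert.hyps by simp
  finally have "(\<integral>x. (cmod (phase_sum g \<theta>' (insert k I) x))\<^sup>2 \<partial>M)
      \<le> (\<Sum>i\<in>insert k I. (g i)\<^sup>2 * (\<integral>x. (cmod (x $ i))\<^sup>2 \<partial>M))" .
  moreover have "\<forall>i. \<theta>' i \<in> {0, pi}" using \<theta> t by (simp add: \<theta>'_def)
  moreover have "integrable M (\<lambda>x. (cmod (phase_sum g \<theta>' (insert k I) x))\<^sup>2)"
    unfolding step by (rule it)
  ultimately show ?case by blast
qed

lemma admissible_second_moment:
  fixes Pw :: "'m::finite \<Rightarrow> real"
  assumes M: "M \<in> admissible Pw" and P: "\<And>i. Pw i > 0"
  shows "integrable M (\<lambda>x. (cmod (x $ i))\<^sup>2)" and "(\<integral>x. (cmod (x $ i))\<^sup>2 \<partial>M) \<le> Pw i"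
proof -
  have sets_M: "sets M = sets borel"
    and bound: "(\<integral>\<^sup>+ x. ennreal ((cmod (x $ i))\<^sup>2) \<partial>M) \<le> ennreal (Pw i)"
    using M by (auto simp: admissible_def)
  have [measurable]: "(\<lambda>x. (cmod (x $ i))\<^sup>2) \<in> borel_measurable M"
    by (simp add: measurable_cong_sets[OF sets_M refl])
  show i: "integrable M (\<lambda>x. (cmod (x $ i))\<^sup>2)"
    by (rule integrableI_bounded) (use bound in \<open>simp_all add: le_less_trans\<close>)
  have "ennreal (\<integral>x. (cmod (x $ i))\<^sup>2 \<partial>M) = (\<integral>\<^sup>+ x. ennreal ((cmod (x $ i))\<^sup>2) \<partial>M)"
    by (rule nn_integral_eq_integral[symmetric, OF i]) simp
  with bound have "ennreal (\<integral>x. (cmod (x $ i))\<^sup>2 \<partial>M) \<le> ennreal (Pw i)" by simp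
  then show "(\<integral>x. (cmod (x $ i))\<^sup>2 \<partial>M) \<le> Pw i"
    using P[of i] by (simp add: ennreal_le_iff)
qed

lemma exists_angles_upper_bound:
  fixes Pw g :: "'m::finite \<Rightarrow> real"
  assumes M: "M \<in> admissible Pw" and P: "\<And>i. Pw i > 0" and N: "N > 0"
  shows "\<exists>\<theta>\<in>angles. Btheta N g \<theta> M \<le> log 2 (1 + (\<Sum>i\<in>UNIV. (g i)\<^sup>2 * Pw i) / N)"
proof -
  have sets_M: "sets M = sets borel" using M by (simp add: admissible_def)
  obtain \<theta> where \<theta>: "\<forall>i. \<theta> i \<in> {0, pi}"
    and i: "integrable M (\<lambda>x. (cmod (phase_sum g \<theta> UNIV x))\<^sup>2)"
    and le: "(\<integral>x. (cmod (phase_sum g \<theta> UNIV x))\<^sup>2 \<partial>M) \<le> (\<Sum>i\<in>UNIV. (g i)\<^sup>2 * (\<integral>x. (cmod (x $ i))\<^sup>2 \<partial>M))"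
    using choose_phases[OF sets_M admissible_second_moment(1)[OF M P] finite[of UNIV]] by blast
  have "0 \<le> \<theta> i \<and> \<theta> i < 2 * pi" for i
    using \<theta> pi_gt_zero by (cases "\<theta> i = 0") auto
  then have "\<theta> \<in> angles" by (simp add: angles_def)
  interpret awgn_channel M N "phase_sum g \<theta> UNIV" using M N by (rule awgn_channel_admissible)
  define S where "S = (\<integral>x. (cmod (phase_sum g \<theta> UNIV x))\<^sup>2 \<partial>M)"
  have S: "S \<ge> 0" "signal_power = ennreal S"
    unfolding S_def signal_power_def by (simp, rule nn_integral_eq_integral[OF i], simp)
  have MI: "MI \<le> log 2 (V S / N)" by (rule MI_le[OF S])
  have V: "V S = N + S" "V S > 0" using V_def[OF S] V_pos[OF S] by simp_all
  have "S \<le> (\<Sum>i\<in>UNIV. (g i)\<^sup>2 * (\<integral>x. (cmod (x $ i))\<^sup>2 \<partial>M))"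
    unfolding S_def by (rule le)
  also have "\<dots> \<le> (\<Sum>i\<in>UNIV. (g i)\<^sup>2 * Pw i)"
    by (intro sum_mono mult_left_mono admissible_second_moment(2)[OF M P]) simp
  finally have "V S / N \<le> 1 + (\<Sum>i\<in>UNIV. (g i)\<^sup>2 * Pw i) / N"
    using N by (simp add: V field_simps)
  with MI V(2) N have "MI \<le> log 2 (1 + (\<Sum>i\<in>UNIV. (g i)\<^sup>2 * Pw i) / N)"
    by (smt (verit) divide_pos_pos log_le_cancel_iff)
  with \<open>\<theta> \<in> angles\<close> show ?thesis using M N by (auto simp: Btheta_eq_MI)
qed

lemma worst_case_le:
  fixes Pw g :: "'m::finite \<Rightarrow> real"
  assumes M: "M \<in> admissible Pw" and P: "\<And>i. Pw i > 0" and N: "N > 0"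
  shows "(INF \<theta>\<in>angles. Btheta N g \<theta> M) \<le> log 2 (1 + (\<Sum>i\<in>UNIV. (g i)\<^sup>2 * Pw i) / N)"
proof -
  obtain \<theta> where "\<theta> \<in> angles" and "Btheta N g \<theta> M \<le> log 2 (1 + (\<Sum>i\<in>UNIV. (g i)\<^sup>2 * Pw i) / N)"
    using exists_angles_upper_bound[OF M P N] by blast
  moreover have "bdd_below ((\<lambda>\<theta>. Btheta N g \<theta> M) ` angles)"
    using Btheta_nonneg[OF M N] by (intro bdd_belowI[of _ 0]) auto
  ultimately show ?thesis by (meson cINF_lower order_trans)
qed

theorem lemma1:
  fixes N :: real and Pw g :: "'m::finite \<Rightarrow> real"
  assumes "N > 0" and "\<And>i. Pw i > 0" and "\<And>i. g i \<ge> 0"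
  shows "(SUP M\<in>admissible Pw. INF \<theta>\<in>angles. Btheta N g \<theta> M)
           = log 2 (1 + (\<Sum>i\<in>UNIV. (g i)\<^sup>2 * Pw i) / N)
       \<and> pstar Pw \<in> admissible Pw
       \<and> (\<forall>\<theta>\<in>angles. Btheta N g \<theta> (pstar Pw) = log 2 (1 + (\<Sum>i\<in>UNIV. (g i)\<^sup>2 * Pw i) / N))"
proof -
  note N = assms(1) and P = assms(2) and g = assms(3)
  define C where "C = log 2 (1 + (\<Sum>i\<in>UNIV. (g i)\<^sup>2 * Pw i) / N)"
  define worst where "worst M = (INF \<theta>\<in>angles. Btheta N g \<theta> M)" for M
  have adm: "pstar Pw \<in> admissible Pw" using P by (rule pstar_admissible)
  have pstar_value: "Btheta N g \<theta> (pstar Pw) = C" for \<theta>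
    unfolding C_def by (rule Btheta_pstar[OF P g N])
  have "(angles :: ('m \<Rightarrow> real) set) \<noteq> {}" by (auto simp: angles_def intro!: exI[of _ "\<lambda>_. 0"])
  then have worst_pstar: "worst (pstar Pw) = C" by (simp add: worst_def pstar_value)
  have worst_le: "worst M \<le> C" if "M \<in> admissible Pw" for M
    unfolding worst_def C_def using that P N by (rule worst_case_le)
  have "(SUP M\<in>admissible Pw. worst M) = C"
  proof (rule antisym)
    show "(SUP M\<in>admissible Pw. worst M) \<le> C" using adm worst_le by (intro cSUP_least) auto
    have "bdd_above (worst ` admissible Pw)" using worst_le by (intro bdd_aboveI[of _ C]) auto
    then show "C \<le> (SUP M\<in>admissible Pw. worst M)"
      using adm worst_pstar by (intro cSUP_upper2[of _ _ "pstar Pw"]) auto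
  qed
  then show ?thesis using adm pstar_value by (simp add: C_def worst_def)
qed

end
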